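(* For every $7$-uniform hypergraph $H=(V,E)$ with $m=|E|$, \[96050\,\tau(H) \le 11093\,n_1 + 17131\,n_2 + 18250\,n_3 + 18400\,n_{\ge 4} + 18400\,m.\] Consequently $c_7 \le 18400/96050$.
   Context: A hypergraph $H=(V,E)$ consists of a finite vertex set $V$ and a finite collection $E$ of subsets of $V$ (edges); it is $k$-uniform if every edge has exactly $k$ vertices. The degree of a vertex $v$ is the number of edges containing $v$. For $i\ge 1$, $n_i$ denotes the number of vertices of degree exactly $i$, and $n_{\ge i}=\sum_{j\ge i} n_j$. A transversal is a vertex set meeting every edge; $\tau(H)$ is the minimum size of a transversal. The Tuza constant is $c_k=\sup \tau(H)/(|E|+|V|)$ over all $k$-uniform hypergraphs $H$. *)

theory Defs
  imports Complex_Main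
begin

definition hypergraph :: "'a set \<Rightarrow> 'a set set \<Rightarrow> bool" where
  "hypergraph V E \<longleftrightarrow> finite V \<and> (\<forall>e\<in>E. e \<subseteq> V)"

definition uniform :: "nat \<Rightarrow> 'a set \<Rightarrow> 'a set set \<Rightarrow> bool" where
  "uniform k V E \<longleftrightarrow> hypergraph V E \<and> (\<forall>e\<in>E. card e = k)"

definition hdegree :: "'a set set \<Rightarrow> 'a \<Rightarrow> nat" where
  "hdegree E v = card {e\<in>E. v \<in> e}"

definition n_deg :: "'a set \<Rightarrow> 'a set set \<Rightarrow> nat \<Rightarrow> nat" where
  "n_deg V E i = card {v\<in>V. hdegree E v = i}"

definition n_deg_ge :: "'a set \<Rightarrow> 'a set set \<Rightarrow> nat \<Rightarrow> nat" where
  "n_deg_ge V E i = card {v\<in>V. hdegree E v \<ge> i}"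

definition transversal :: "'a set \<Rightarrow> 'a set set \<Rightarrow> 'a set \<Rightarrow> bool" where
  "transversal V E T \<longleftrightarrow> T \<subseteq> V \<and> (\<forall>e\<in>E. T \<inter> e \<noteq> {})"

definition tau :: "'a set \<Rightarrow> 'a set set \<Rightarrow> nat" where
  "tau V E = (LEAST t. \<exists>T. transversal V E T \<and> card T = t)"

text \<open>Tuza constant: supremum of tau/(|E|+|V|) over all k-uniform hypergraphs
  (vertex type nat suffices, every finite hypergraph being isomorphic to one on nat).\<close>

definition tuza_const :: "nat \<Rightarrow> real" where
  "tuza_const k = Sup {real (tau V E) / real (card E + card V) | (V :: nat set) E. uniform k V E}"

end

theory Submission
  imports Defs
begin

text \<open>Greedy transversal with a potential on degrees. Repeatedly put a vertex \<open>v\<close> of maximum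
  degree \<open>c\<close> into the transversal and delete the \<open>c\<close> edges through it. If \<open>\<phi>\<close> grows by at most
  \<open>\<iota>(c)\<close> per unit on degrees up to \<open>c\<close>, this lowers \<open>\<Sum>\<^sub>u \<phi>(d(u))\<close> by at most \<open>\<phi>(c) + 6c \<iota>(c)\<close>,
  since the other vertices of the deleted edges lose \<open>6c\<close> degree units in total. When
  \<open>\<phi>(c) + 6c \<iota>(c) + C \<le> C c\<close> for all \<open>c \<ge> 1\<close>, induction gives \<open>C \<tau> + \<Sum>\<^sub>u \<phi>(d(u)) \<le> C m\<close>.
  Adding \<open>\<Sum>\<^sub>u d(u) = 7m\<close> weighted by the pointwise bound \<open>\<phi>(d) + 7 w(d) \<ge> 77650 d\<close> eliminates
  \<open>\<phi>\<close> and leaves \<open>96050 \<tau> \<le> 18400 m + \<Sum>\<^sub>u w(d(u))\<close>; as \<open>w \<le> 18400\<close>, also \<open>c\<^sub>7 \<le> 18400/96050\<close>.\<close>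

lemma finite_edges_hypergraph:
  assumes "hypergraph V E"
  shows "finite E"
  using assms unfolding hypergraph_def by (meson Pow_iff finite_Pow_iff finite_subset subsetI)

lemma uniform_subset: "uniform k V E \<Longrightarrow> E' \<subseteq> E \<Longrightarrow> uniform k V E'"
  unfolding uniform_def hypergraph_def by blast

lemma tau_le_card: "transversal V E T \<Longrightarrow> tau V E \<le> card T"
  unfolding tau_def by (auto intro: Least_le)

lemma hdegree_Un_disjoint:
  assumes "finite E1" "finite E2" "E1 \<inter> E2 = {}"
  shows "hdegree (E1 \<union> E2) u = hdegree E1 u + hdegree E2 u"
proof -
  have "{e \<in> E1 \<union> E2. u \<in> e} = {e \<in> E1. u \<in> e} \<union> {e \<in> E2. u \<in> e}" by auto
  with assms show ?thesis unfolding hdegree_def by (simp add: card_Un_disjoint disjoint_iff)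
qed

lemma sum_hdegree_eq_sum_card_Int:
  assumes "finite A" "finite E"
  shows "(\<Sum>u\<in>A. hdegree E u) = (\<Sum>e\<in>E. card (e \<inter> A))"
proof -
  have count: "card {x \<in> X. P x} = (\<Sum>x\<in>X. if P x then 1 else 0)"
    if "finite X" for X :: "'b set" and P
    using that by (simp add: sum.inter_filter[symmetric])
  have "(\<Sum>u\<in>A. hdegree E u) = (\<Sum>u\<in>A. \<Sum>e\<in>E. if u \<in> e then 1 else 0)"
    using assms by (simp add: hdegree_def count)
  also have "\<dots> = (\<Sum>e\<in>E. \<Sum>u\<in>A. if u \<in> e then 1 else 0)"
    by (rule sum.swap)
  also have "\<dots> = (\<Sum>e\<in>E. card (e \<inter> A))"
  proof (rule sum.cong)
    fix e
    have "e \<inter> A = {u \<in> A. u \<in> e}" by blast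
    then show "(\<Sum>u\<in>A. if u \<in> e then 1 else 0) = card (e \<inter> A)"
      using assms by (simp add: count)
  qed simp
  finally show ?thesis .
qed

lemma sum_hdegree_uniform:
  assumes "uniform k V E"
  shows "(\<Sum>u\<in>V. hdegree E u) = k * card E"
proof -
  have "finite V" "finite E" "\<And>e. e \<in> E \<Longrightarrow> e \<inter> V = e \<and> card e = k"
    using assms finite_edges_hypergraph unfolding uniform_def hypergraph_def by auto
  then show ?thesis by (simp add: sum_hdegree_eq_sum_card_Int)
qed

lemma sum_hdegree_star:
  assumes "uniform k V E"
  shows "(\<Sum>u\<in>V - {v}. hdegree {e \<in> E. v \<in> e} u) = (k - 1) * hdegree E v"
proof -
  have "finite V" "finite E" "\<And>e. e \<in> E \<Longrightarrow> e \<subseteq> V \<and> card e = k"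
    using assms finite_edges_hypergraph unfolding uniform_def hypergraph_def by auto
  then have "card (e \<inter> (V - {v})) = k - 1" if "e \<in> {e \<in> E. v \<in> e}" for e
  proof -
    from that \<open>\<And>e. e \<in> E \<Longrightarrow> e \<subseteq> V \<and> card e = k\<close>
    have "e \<inter> (V - {v}) = e - {v}" "card e = k" "v \<in> e" by auto
    then show ?thesis by simp
  qed
  moreover have "(\<Sum>u\<in>V - {v}. hdegree {e \<in> E. v \<in> e} u) = (\<Sum>e\<in>{e \<in> E. v \<in> e}. card (e \<inter> (V - {v})))"
    using \<open>finite V\<close> \<open>finite E\<close> by (simp add: sum_hdegree_eq_sum_card_Int)
  ultimately show ?thesis by (simp add: hdegree_def)
qed

lemma bounded_increments_le:
  fixes f :: "nat \<Rightarrow> nat"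
  assumes step: "\<And>a. a < c \<Longrightarrow> f (Suc a) \<le> f a + i" and "a + j \<le> c"
  shows "f (a + j) \<le> f a + j * i"
  using \<open>a + j \<le> c\<close>
proof (induction j)
  case (Suc j)
  have "f (a + Suc j) \<le> f (a + j) + i" using step Suc.prems by simp
  also have "\<dots> \<le> f a + Suc j * i" using Suc by simp
  finally show ?case .
qed simp

lemma potential_remove_star:
  fixes phi :: "nat \<Rightarrow> nat"
  assumes U: "uniform k V E" and v: "v \<in> V"
    and max_degree: "\<And>u. u \<in> V \<Longrightarrow> hdegree E u \<le> hdegree E v"
    and phi_0: "phi 0 = 0"
    and phi_step: "\<And>a. a < hdegree E v \<Longrightarrow> phi (Suc a) \<le> phi a + i"
  shows "(\<Sum>u\<in>V. phi (hdegree E u))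
           \<le> phi (hdegree E v) + (k - 1) * hdegree E v * i + (\<Sum>u\<in>V. phi (hdegree {e \<in> E. v \<notin> e} u))"
proof -
  define Ev where "Ev = {e \<in> E. v \<in> e}"
  define E' where "E' = {e \<in> E. v \<notin> e}"
  have "finite V" "finite E" using U finite_edges_hypergraph unfolding uniform_def hypergraph_def by auto
  have degree_split: "hdegree E u = hdegree E' u + hdegree Ev u" for u
  proof -
    have "E = E' \<union> Ev" "E' \<inter> Ev = {}" unfolding E'_def Ev_def by auto
    with \<open>finite E\<close> show ?thesis by (metis hdegree_Un_disjoint finite_Un)
  qed
  have "phi (hdegree E u) \<le> phi (hdegree E' u) + hdegree Ev u * i" if "u \<in> V" for u
    using bounded_increments_le[where f = phi and c = "hdegree E v" and i = i, OF phi_step]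
      max_degree[OF that] degree_split[of u] by simp
  then have "(\<Sum>u\<in>V - {v}. phi (hdegree E u)) \<le> (\<Sum>u\<in>V - {v}. phi (hdegree E' u) + hdegree Ev u * i)"
    by (intro sum_mono) auto
  also have "\<dots> = (\<Sum>u\<in>V - {v}. phi (hdegree E' u)) + (k - 1) * hdegree E v * i"
    using sum_hdegree_star[OF U, of v] by (simp add: Ev_def sum.distrib sum_distrib_right[symmetric])
  also have "(\<Sum>u\<in>V - {v}. phi (hdegree E' u)) = (\<Sum>u\<in>V. phi (hdegree E' u))"
    using sum.remove[OF \<open>finite V\<close> v, of "\<lambda>u. phi (hdegree E' u)"] phi_0
    by (simp add: E'_def hdegree_def)
  finally show ?thesis
    using sum.remove[OF \<open>finite V\<close> v, of "\<lambda>u. phi (hdegree E u)"] by (simp add: E'_def)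
qed

lemma greedy_transversal_potential:
  fixes phi incr :: "nat \<Rightarrow> nat"
  assumes U: "uniform k V E" and "1 \<le> k"
    and phi_0: "phi 0 = 0"
    and phi_step: "\<And>a c. a < c \<Longrightarrow> phi (Suc a) \<le> phi a + incr c"
    and greedy_step: "\<And>c. 1 \<le> c \<Longrightarrow> phi c + (k - 1) * c * incr c + C \<le> C * c"
  shows "\<exists>T. transversal V E T \<and> C * card T + (\<Sum>u\<in>V. phi (hdegree E u)) \<le> C * card E"
  using finite_edges_hypergraph[OF U[unfolded uniform_def, THEN conjunct1]] U
proof (induction E rule: finite_psubset_induct)
  case (psubset E)
  have "finite V" using psubset.prems unfolding uniform_def hypergraph_def by simp
  show ?case
  proof (cases "E = {}")
    case True
    then show ?thesis using phi_0 by (auto simp: transversal_def hdegree_def)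
  next
    case False
    then obtain e u where "e \<in> E" "u \<in> e"
      using psubset.prems \<open>1 \<le> k\<close> unfolding uniform_def by fastforce
    then have "u \<in> V" "hdegree E u \<noteq> 0"
      using psubset.prems psubset.hyps unfolding uniform_def hypergraph_def hdegree_def by auto
    obtain v where v: "v \<in> V" and v_max: "hdegree E v = Max (hdegree E ` V)"
    proof -
      have "Max (hdegree E ` V) \<in> hdegree E ` V"
        using \<open>finite V\<close> \<open>u \<in> V\<close> by (intro Max_in) auto
      then show ?thesis using that by (metis imageE)
    qed
    have max_degree: "\<And>u. u \<in> V \<Longrightarrow> hdegree E u \<le> hdegree E v"
      unfolding v_max using \<open>finite V\<close> by simp
    define c where "c = hdegree E v"
    define E' where "E' = {e \<in> E. v \<notin> e}"
    have "1 \<le> c" using max_degree[OF \<open>u \<in> V\<close>] \<open>hdegree E u \<noteq> 0\<close> unfolding c_def by linarith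
    have card_E: "card E = card E' + c"
    proof -
      have "E = E' \<union> {e \<in> E. v \<in> e}" "E' \<inter> {e \<in> E. v \<in> e} = {}" unfolding E'_def by auto
      with psubset.hyps have "card E = card E' + card {e \<in> E. v \<in> e}"
        by (metis card_Un_disjoint finite_Un)
      then show ?thesis by (simp add: c_def hdegree_def)
    qed
    have "E' \<subseteq> E" unfolding E'_def by blast
    moreover have "E' \<noteq> E" using card_E \<open>1 \<le> c\<close> by auto
    ultimately obtain T' where T': "transversal V E' T'"
      and bound': "C * card T' + (\<Sum>u\<in>V. phi (hdegree E' u)) \<le> C * card E'"
      using psubset.IH uniform_subset[OF psubset.prems \<open>E' \<subseteq> E\<close>] by blast
    have T: "transversal V E (insert v T')"
      using T' v unfolding transversal_def E'_def by blast
    have "card (insert v T') \<le> card T' + 1"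
      by (simp add: card_insert_le_m1 card_insert_if)
    then have "C * card (insert v T') \<le> C * card T' + C"
      using mult_le_mono2[of "card (insert v T')" "card T' + 1" C] by simp
    have "(\<Sum>u\<in>V. phi (hdegree E u)) \<le> phi c + (k - 1) * c * incr c + (\<Sum>u\<in>V. phi (hdegree E' u))"
      using potential_remove_star[OF psubset.prems v max_degree phi_0 phi_step]
      unfolding c_def E'_def .
    with \<open>C * card (insert v T') \<le> C * card T' + C\<close>
    have "C * card (insert v T') + (\<Sum>u\<in>V. phi (hdegree E u))
          \<le> (C * card T' + (\<Sum>u\<in>V. phi (hdegree E' u))) + (phi c + (k - 1) * c * incr c + C)"
      by linarith
    also have "\<dots> \<le> C * card E' + C * c"
      using bound' greedy_step[OF \<open>1 \<le> c\<close>] by (rule add_mono)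
    finally have "C * card (insert v T') + (\<Sum>u\<in>V. phi (hdegree E u)) \<le> C * card E"
      by (simp add: card_E add_mult_distrib2)
    with T show ?thesis by blast
  qed
qed

lemma tuza_const_le:
  assumes "0 \<le> r"
    and bound: "\<And>(V :: nat set) E. uniform k V E \<Longrightarrow> real (tau V E) \<le> r * real (card E + card V)"
  shows "tuza_const k \<le> r"
  unfolding tuza_const_def
proof (rule cSup_least)
  have "uniform k ({} :: nat set) {}" unfolding uniform_def hypergraph_def by simp
  then show "{real (tau V E) / real (card E + card V) | (V :: nat set) E. uniform k V E} \<noteq> {}"
    by blast
next
  fix x assume "x \<in> {real (tau V E) / real (card E + card V) | (V :: nat set) E. uniform k V E}"
  then obtain V :: "nat set" and E where x: "x = real (tau V E) / real (card E + card V)"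
    and "uniform k V E" by blast
  then show "x \<le> r"
    using bound[OF \<open>uniform k V E\<close>] \<open>0 \<le> r\<close> by (cases "card E + card V = 0") (simp_all add: divide_le_eq)
qed

definition tuza7_potential :: "nat \<Rightarrow> nat" where
  "tuza7_potential d = (if d \<le> 1 then 0 else if d = 2 then 50000 else if d = 3 then 110000
                        else 185000 + 78000 * (d - 4))"

definition tuza7_increment :: "nat \<Rightarrow> nat" where
  "tuza7_increment c = (if c \<le> 1 then 0 else if c = 2 then 50000 else if c = 3 then 60000
                        else if c = 4 then 75000 else 78000)"

definition tuza7_weight :: "nat \<Rightarrow> nat" where
  "tuza7_weight d = (if d = 0 then 0 else if d = 1 then 11093 else if d = 2 then 17131
                     else if d = 3 then 18250 else 18400)"

lemma tuza7_potential_step: "a < c \<Longrightarrow> tuza7_potential (Suc a) \<le> tuza7_potential a + tuza7_increment c"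
  unfolding tuza7_potential_def tuza7_increment_def by auto

lemma tuza7_greedy_step:
  "1 \<le> c \<Longrightarrow> tuza7_potential c + 6 * c * tuza7_increment c + 672350 \<le> 672350 * c"
  unfolding tuza7_potential_def tuza7_increment_def by auto

lemma tuza7_potential_weight: "77650 * d \<le> tuza7_potential d + 7 * tuza7_weight d"
  unfolding tuza7_potential_def tuza7_weight_def by auto

lemma tuza7_weight_le: "tuza7_weight d \<le> 18400"
  unfolding tuza7_weight_def by auto

lemma sum_tuza7_weight:
  assumes "finite V"
  shows "(\<Sum>u\<in>V. tuza7_weight (hdegree E u))
           = 11093 * n_deg V E 1 + 17131 * n_deg V E 2 + 18250 * n_deg V E 3 + 18400 * n_deg_ge V E 4"
proof -
  have "tuza7_weight d = 11093 * of_bool (d = 1) + 17131 * of_bool (d = 2)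
                         + 18250 * of_bool (d = 3) + 18400 * of_bool (4 \<le> d)" for d
    unfolding tuza7_weight_def by auto
  with assms show ?thesis
    by (simp add: n_deg_def n_deg_ge_def sum.distrib sum_distrib_left[symmetric] sum.inter_filter[symmetric] Collect_conj_eq)
qed

lemma tau_le_weighted_degrees_7:
  assumes U: "uniform 7 V E"
  shows "96050 * tau V E \<le> 18400 * card E + (\<Sum>u\<in>V. tuza7_weight (hdegree E u))"
proof -
  have potential_0: "tuza7_potential 0 = 0" by (simp add: tuza7_potential_def)
  have greedy_step: "tuza7_potential c + (7 - 1) * c * tuza7_increment c + 672350 \<le> 672350 * c"
    if "1 \<le> c" for c
    using tuza7_greedy_step[OF that] by simp
  obtain T where "transversal V E T"
    and greedy: "672350 * card T + (\<Sum>u\<in>V. tuza7_potential (hdegree E u)) \<le> 672350 * card E"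
    using greedy_transversal_potential[where phi = tuza7_potential and incr = tuza7_increment,
        OF U _ potential_0 tuza7_potential_step greedy_step] by auto
  have "543550 * card E = 77650 * (\<Sum>u\<in>V. hdegree E u)"
    by (simp add: sum_hdegree_uniform[OF U])
  also have "\<dots> \<le> (\<Sum>u\<in>V. tuza7_potential (hdegree E u) + 7 * tuza7_weight (hdegree E u))"
    unfolding sum_distrib_left by (intro sum_mono tuza7_potential_weight)
  finally have "543550 * card E
      \<le> (\<Sum>u\<in>V. tuza7_potential (hdegree E u)) + 7 * (\<Sum>u\<in>V. tuza7_weight (hdegree E u))"
    by (simp add: sum.distrib sum_distrib_left)
  \<comment> \<open>\<open>672350 = 7 \<cdot> 96050\<close> and \<open>672350 - 543550 = 7 \<cdot> 18400\<close>, so adding the two bounds gives 7 times the claim.\<close>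
  with greedy have "96050 * card T \<le> 18400 * card E + (\<Sum>u\<in>V. tuza7_weight (hdegree E u))"
    by linarith
  with tau_le_card[OF \<open>transversal V E T\<close>] show ?thesis by linarith
qed

theorem lemma1:
  fixes V :: "'a set" and E :: "'a set set"
  shows "(uniform 7 V E \<longrightarrow>
            96050 * tau V E \<le> 11093 * n_deg V E 1 + 17131 * n_deg V E 2 + 18250 * n_deg V E 3
                               + 18400 * n_deg_ge V E 4 + 18400 * card E)
         \<and> tuza_const 7 \<le> 18400 / 96050"
proof (intro conjI impI)
  assume U: "uniform 7 V E"
  then have "finite V" unfolding uniform_def hypergraph_def by simp
  with tau_le_weighted_degrees_7[OF U] show "96050 * tau V E \<le> 11093 * n_deg V E 1
      + 17131 * n_deg V E 2 + 18250 * n_deg V E 3 + 18400 * n_deg_ge V E 4 + 18400 * card E"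
    by (simp add: sum_tuza7_weight)
next
  show "tuza_const 7 \<le> 18400 / 96050"
  proof (rule tuza_const_le)
    fix V :: "nat set" and E
    assume U: "uniform 7 V E"
    have "(\<Sum>u\<in>V. tuza7_weight (hdegree E u)) \<le> 18400 * card V"
      using sum_mono[of V "\<lambda>u. tuza7_weight (hdegree E u)" "\<lambda>_. 18400"] tuza7_weight_le by simp
    with tau_le_weighted_degrees_7[OF U] have "96050 * tau V E \<le> 18400 * (card E + card V)"
      unfolding add_mult_distrib2 by linarith
    then show "real (tau V E) \<le> 18400 / 96050 * real (card E + card V)"
      by (simp add: of_nat_le_iff[symmetric] del: of_nat_le_iff)
  qed simp
qed

end
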